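(* Let $k$ be a field, $(C,\Delta)$ a coassociative coalgebra over $k$ that is skew cocommutative, i.e. $\tau\circ\Delta=-\Delta$ where $\tau(x\otimes y)=y\otimes x$, and let $(L,[\,,\,])$ be a Lie algebra over $k$. Let $\Phi(f\otimes g)(c)=\sum[f(c_{(1)}),g(c_{(2)})]$ for $f,g\in Hom(C,L)$, $\Delta(c)=\sum c_{(1)}\otimes c_{(2)}$. Then $\Phi$ is symmetric, $\Phi(g\otimes f)=\Phi(f\otimes g)$, and satisfies the Jacobi identity $\Phi(f\otimes\Phi(g\otimes h))+\Phi(g\otimes\Phi(h\otimes f))+\Phi(h\otimes\Phi(f\otimes g))=0$ for all $f,g,h\in Hom(C,L)$.
   Context: $Hom(C,L)$ denotes the vector space of $k$-linear maps $C\to L$. *)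

theory Defs
  imports Main "HOL.Vector_Spaces"
begin

definition bilinear_map ::
  "('k::field \<Rightarrow> 'a::ab_group_add \<Rightarrow> 'a) \<Rightarrow> ('k \<Rightarrow> 'b::ab_group_add \<Rightarrow> 'b)
   \<Rightarrow> ('k \<Rightarrow> 'e::ab_group_add \<Rightarrow> 'e) \<Rightarrow> ('a \<Rightarrow> 'b \<Rightarrow> 'e) \<Rightarrow> bool" where
  "bilinear_map sa sb se \<beta> \<longleftrightarrow>
     (\<forall>y. Vector_Spaces.linear sa se (\<lambda>x. \<beta> x y)) \<and> (\<forall>x. Vector_Spaces.linear sb se (\<beta> x))"

definition trilinear_form ::
  "('k::field \<Rightarrow> 'c::ab_group_add \<Rightarrow> 'c) \<Rightarrow> ('c \<Rightarrow> 'c \<Rightarrow> 'c \<Rightarrow> 'k) \<Rightarrow> bool" where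
  "trilinear_form s \<tau> \<longleftrightarrow>
     (\<forall>y z. Vector_Spaces.linear s (*) (\<lambda>x. \<tau> x y z)) \<and>
     (\<forall>x z. Vector_Spaces.linear s (*) (\<lambda>y. \<tau> x y z)) \<and>
     (\<forall>x y. Vector_Spaces.linear s (*) (\<lambda>z. \<tau> x y z))"

text \<open>An element of C \<otimes> C is represented by a finite list of pairs (the sum of
  the corresponding simple tensors); an element of C \<otimes> C \<otimes> C by a list of triples.
  Two representatives denote the same tensor iff every bilinear (trilinear) form
  C \<times> C \<rightarrow> k (C \<times> C \<times> C \<rightarrow> k) takes the same value on them (valid over a field).\<close>

definition teq2 :: "('k::field \<Rightarrow> 'c::ab_group_add \<Rightarrow> 'c) \<Rightarrow> ('c \<times> 'c) list \<Rightarrow> ('c \<times> 'c) list \<Rightarrow> bool" where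
  "teq2 s xs ys \<longleftrightarrow> (\<forall>\<beta> :: 'c \<Rightarrow> 'c \<Rightarrow> 'k. bilinear_map s s (*) \<beta> \<longrightarrow>
     sum_list (map (\<lambda>(a,b). \<beta> a b) xs) = sum_list (map (\<lambda>(a,b). \<beta> a b) ys))"

definition teq3 :: "('k::field \<Rightarrow> 'c::ab_group_add \<Rightarrow> 'c) \<Rightarrow> ('c \<times> 'c \<times> 'c) list \<Rightarrow> ('c \<times> 'c \<times> 'c) list \<Rightarrow> bool" where
  "teq3 s xs ys \<longleftrightarrow> (\<forall>\<tau> :: 'c \<Rightarrow> 'c \<Rightarrow> 'c \<Rightarrow> 'k. trilinear_form s \<tau> \<longrightarrow>
     sum_list (map (\<lambda>(a,b,c). \<tau> a b c) xs) = sum_list (map (\<lambda>(a,b,c). \<tau> a b c) ys))"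

text \<open>A (not necessarily counital) coassociative coalgebra: a vector space C with a
  linear comultiplication \<Delta> : C \<rightarrow> C \<otimes> C such that (\<Delta> \<otimes> id)\<Delta> = (id \<otimes> \<Delta>)\<Delta>.\<close>

definition coassoc_coalgebra :: "('k::field \<Rightarrow> 'c::ab_group_add \<Rightarrow> 'c) \<Rightarrow> ('c \<Rightarrow> ('c \<times> 'c) list) \<Rightarrow> bool" where
  "coassoc_coalgebra s \<Delta> \<longleftrightarrow>
     vector_space s \<and>
     (\<forall>x y. teq2 s (\<Delta> (x + y)) (\<Delta> x @ \<Delta> y)) \<and>
     (\<forall>r x. teq2 s (\<Delta> (s r x)) (map (\<lambda>(a,b). (s r a, b)) (\<Delta> x))) \<and>
     (\<forall>c. teq3 s
        (concat (map (\<lambda>(a,b). map (\<lambda>(a1,a2). (a1,a2,b)) (\<Delta> a)) (\<Delta> c)))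
        (concat (map (\<lambda>(a,b). map (\<lambda>(b1,b2). (a,b1,b2)) (\<Delta> b)) (\<Delta> c))))"

definition skew_cocommutative :: "('k::field \<Rightarrow> 'c::ab_group_add \<Rightarrow> 'c) \<Rightarrow> ('c \<Rightarrow> ('c \<times> 'c) list) \<Rightarrow> bool" where
  "skew_cocommutative s \<Delta> \<longleftrightarrow>
     (\<forall>c. teq2 s (map (\<lambda>(a,b). (b,a)) (\<Delta> c)) (map (\<lambda>(a,b). (- a, b)) (\<Delta> c)))"

definition lie_algebra :: "('k::field \<Rightarrow> 'l::ab_group_add \<Rightarrow> 'l) \<Rightarrow> ('l \<Rightarrow> 'l \<Rightarrow> 'l) \<Rightarrow> bool" where
  "lie_algebra s br \<longleftrightarrow>
     vector_space s \<and> bilinear_map s s s br \<and>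
     (\<forall>x. br x x = 0) \<and>
     (\<forall>x y z. br x (br y z) + br y (br z x) + br z (br x y) = 0)"

definition Phi :: "('c \<Rightarrow> ('c \<times> 'c) list) \<Rightarrow> ('l \<Rightarrow> 'l \<Rightarrow> 'l::ab_group_add) \<Rightarrow> ('c \<Rightarrow> 'l) \<Rightarrow> ('c \<Rightarrow> 'l) \<Rightarrow> 'c \<Rightarrow> 'l" where
  "Phi \<Delta> br f g = (\<lambda>c. sum_list (map (\<lambda>(a,b). br (f a) (g b)) (\<Delta> c)))"

end

theory Submission
  imports Defs
begin

text \<open>Tensors in \<open>C \<otimes> C\<close> and \<open>C \<otimes> C \<otimes> C\<close> are only observed through \<open>k\<close>-valued
  multilinear forms; since linear functionals on a vector space separate its points, the
  coalgebra axioms transfer to multilinear maps with values in any vector space, in particular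
  in \<open>L\<close>. Symmetry of \<open>\<Phi>\<close> is then skew cocommutativity combined with antisymmetry of the
  bracket. For the Jacobi identity, coassociativity together with skew cocommutativity in the
  first two and in the last two tensor factors (two sign changes) shows that
  \<open>\<Sum> \<tau>(c\<^sub>1, c\<^sub>2, c\<^sub>3)\<close> is invariant under cyclic permutation of the arguments of a
  trilinear \<open>\<tau>\<close>. This turns the three terms into one sum of Jacobiators
  \<open>[f c\<^sub>1, [g c\<^sub>2, h c\<^sub>3]] + [g c\<^sub>2, [h c\<^sub>3, f c\<^sub>1]] + [h c\<^sub>3, [f c\<^sub>1, g c\<^sub>2]] = 0\<close>.\<close>

lemma sum_list_concat: "sum_list (concat xss) = sum_list (map sum_list xss)"
  for xss :: "'a::monoid_add list list"
  by (induction xss) auto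

lemma linear_imp_vector_space_pair:
  "Vector_Spaces.linear s1 s2 f \<Longrightarrow> vector_space_pair s1 s2"
  by (simp add: linear_iff vector_space_pair.intro)

lemma linear_uminus: "Vector_Spaces.linear s1 s2 f \<Longrightarrow> f (- x) = - f x"
  using vector_space_pair.linear_neg[OF linear_imp_vector_space_pair] .

lemma linear_sum_list:
  assumes f: "Vector_Spaces.linear s1 s2 f"
  shows "f (sum_list (map g xs)) = sum_list (map (\<lambda>x. f (g x)) xs)"
  using vector_space_pair.linear_add[OF linear_imp_vector_space_pair[OF f] f]
    vector_space_pair.linear_0[OF linear_imp_vector_space_pair[OF f] f]
  by (induction xs) auto

lemma vector_space_field_mult: "vector_space ((*) :: 'k::field \<Rightarrow> 'k \<Rightarrow> 'k)"
  by unfold_locales (auto simp: algebra_simps)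

lemma linear_functionals_separate:
  fixes s :: "'k::field \<Rightarrow> 'v::ab_group_add \<Rightarrow> 'v"
  assumes vs: "vector_space s"
    and eq: "\<And>\<phi>. Vector_Spaces.linear s ((*) :: 'k \<Rightarrow> 'k \<Rightarrow> 'k) \<phi> \<Longrightarrow> \<phi> u = \<phi> v"
  shows "u = v"
proof (rule ccontr)
  assume "u \<noteq> v"
  interpret vector_space_pair s "(*) :: 'k \<Rightarrow> 'k \<Rightarrow> 'k"
    using vs vector_space_field_mult by (simp add: vector_space_pair_def)
  have "vs1.independent {u - v}"
    using \<open>u \<noteq> v\<close> by simp
  then obtain \<phi> where \<phi>: "Vector_Spaces.linear s (*) \<phi>" and "\<phi> (u - v) = 1"
    using linear_independent_extend[of "{u - v}" "\<lambda>_. 1"] by auto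
  with eq[OF \<phi>] show False
    by (simp add: linear_diff[OF \<phi>])
qed

definition trilinear_map ::
  "('k::field \<Rightarrow> 'c::ab_group_add \<Rightarrow> 'c) \<Rightarrow> ('k \<Rightarrow> 'e::ab_group_add \<Rightarrow> 'e)
   \<Rightarrow> ('c \<Rightarrow> 'c \<Rightarrow> 'c \<Rightarrow> 'e) \<Rightarrow> bool" where
  "trilinear_map s se \<tau> \<longleftrightarrow>
     (\<forall>y z. Vector_Spaces.linear s se (\<lambda>x. \<tau> x y z)) \<and>
     (\<forall>x z. Vector_Spaces.linear s se (\<lambda>y. \<tau> x y z)) \<and>
     (\<forall>x y. Vector_Spaces.linear s se (\<lambda>z. \<tau> x y z))"

lemma trilinear_form_iff_trilinear_map: "trilinear_form s \<tau> \<longleftrightarrow> trilinear_map s (*) \<tau>"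
  by (simp add: trilinear_form_def trilinear_map_def)

lemma linear_comp:
  "Vector_Spaces.linear s1 s2 f \<Longrightarrow> Vector_Spaces.linear s2 s3 g \<Longrightarrow>
   Vector_Spaces.linear s1 s3 (\<lambda>x. g (f x))"
  using Vector_Spaces.linear_compose[of s1 s2 f s3 g] by (simp add: o_def)

lemma bilinear_map_swap: "bilinear_map sa sb se \<beta> \<Longrightarrow> bilinear_map sb sa se (\<lambda>x y. \<beta> y x)"
  by (simp add: bilinear_map_def)

lemma bilinear_map_compose_linear:
  assumes "bilinear_map sa sb se \<beta>" and "Vector_Spaces.linear se sv \<phi>"
  shows "bilinear_map sa sb sv (\<lambda>x y. \<phi> (\<beta> x y))"
  using assms unfolding bilinear_map_def by (simp add: linear_comp[of _ se _ sv \<phi>])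

lemma bilinear_map_compose_linear_args:
  assumes \<beta>: "bilinear_map sa sb se \<beta>"
    and f: "Vector_Spaces.linear sc sa f" and g: "Vector_Spaces.linear sc sb g"
  shows "bilinear_map sc sc se (\<lambda>x y. \<beta> (f x) (g y))"
proof -
  have "Vector_Spaces.linear sa se (\<lambda>u. \<beta> u v)" "Vector_Spaces.linear sb se (\<beta> u)" for u v
    using \<beta> by (simp_all add: bilinear_map_def)
  from linear_comp[OF f this(1)] linear_comp[OF g this(2)] show ?thesis
    by (simp add: bilinear_map_def)
qed

lemma trilinear_map_compose_linear:
  assumes "trilinear_map s se \<tau>" and "Vector_Spaces.linear se sv \<phi>"
  shows "trilinear_map s sv (\<lambda>x y z. \<phi> (\<tau> x y z))"
  using assms unfolding trilinear_map_def by (simp add: linear_comp[of _ se _ sv \<phi>])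

lemma trilinear_map_rotate: "trilinear_map s se \<tau> \<Longrightarrow> trilinear_map s se (\<lambda>x y z. \<tau> z x y)"
  by (simp add: trilinear_map_def)

lemma trilinear_map_iterated_bracket:
  assumes br: "bilinear_map sL sL sL br" and f: "Vector_Spaces.linear sC sL f"
    and g: "Vector_Spaces.linear sC sL g" and h: "Vector_Spaces.linear sC sL h"
  shows "trilinear_map sC sL (\<lambda>x y z. br (f x) (br (g y) (h z)))"
  unfolding trilinear_map_def
proof safe
  have br1: "Vector_Spaces.linear sL sL (\<lambda>x. br x u)"
    and br2: "Vector_Spaces.linear sL sL (br u)" for u
    using br by (simp_all add: bilinear_map_def)
  fix x y z
  show "Vector_Spaces.linear sC sL (\<lambda>x. br (f x) (br (g y) (h z)))"
    using linear_comp[OF f br1] .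
  show "Vector_Spaces.linear sC sL (\<lambda>y. br (f x) (br (g y) (h z)))"
    using linear_comp[OF linear_comp[OF g br1] br2] .
  show "Vector_Spaces.linear sC sL (\<lambda>z. br (f x) (br (g y) (h z)))"
    using linear_comp[OF linear_comp[OF h br2] br2] .
qed

lemma teq2_bilinear_map:
  assumes "teq2 s xs ys" and \<beta>: "bilinear_map s s sv \<beta>"
  shows "sum_list (map (\<lambda>(a, b). \<beta> a b) xs) = sum_list (map (\<lambda>(a, b). \<beta> a b) ys)"
proof (rule linear_functionals_separate)
  show "vector_space sv"
    using \<beta> unfolding bilinear_map_def linear_iff by blast
  fix \<phi> assume \<phi>: "Vector_Spaces.linear sv (*) \<phi>"
  then have "bilinear_map s s (*) (\<lambda>x y. \<phi> (\<beta> x y))"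
    by (rule bilinear_map_compose_linear[OF \<beta>])
  with \<open>teq2 s xs ys\<close>
  have "sum_list (map (\<lambda>(a, b). \<phi> (\<beta> a b)) xs) = sum_list (map (\<lambda>(a, b). \<phi> (\<beta> a b)) ys)"
    unfolding teq2_def by blast
  then show "\<phi> (sum_list (map (\<lambda>(a, b). \<beta> a b) xs))
      = \<phi> (sum_list (map (\<lambda>(a, b). \<beta> a b) ys))"
    by (simp add: linear_sum_list[OF \<phi>] case_prod_unfold)
qed

lemma teq3_trilinear_map:
  assumes "teq3 s xs ys" and \<tau>: "trilinear_map s sv \<tau>"
  shows "sum_list (map (\<lambda>(a, b, c). \<tau> a b c) xs) = sum_list (map (\<lambda>(a, b, c). \<tau> a b c) ys)"
proof (rule linear_functionals_separate)
  show "vector_space sv"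
    using \<tau> unfolding trilinear_map_def linear_iff by blast
  fix \<phi> assume \<phi>: "Vector_Spaces.linear sv (*) \<phi>"
  then have "trilinear_form s (\<lambda>x y z. \<phi> (\<tau> x y z))"
    unfolding trilinear_form_iff_trilinear_map by (rule trilinear_map_compose_linear[OF \<tau>])
  with \<open>teq3 s xs ys\<close>
  have "sum_list (map (\<lambda>(a, b, c). \<phi> (\<tau> a b c)) xs)
      = sum_list (map (\<lambda>(a, b, c). \<phi> (\<tau> a b c)) ys)"
    unfolding teq3_def by blast
  then show "\<phi> (sum_list (map (\<lambda>(a, b, c). \<tau> a b c) xs))
      = \<phi> (sum_list (map (\<lambda>(a, b, c). \<tau> a b c) ys))"
    by (simp add: linear_sum_list[OF \<phi>] case_prod_unfold)
qed

text \<open>Nesting it in the first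
  or in the second argument gives the two readings of \<open>\<Sum> \<tau>(c\<^sub>1, c\<^sub>2, c\<^sub>3)\<close>, which agree by
  coassociativity.\<close>

definition sweedler ::
  "('c \<Rightarrow> ('c \<times> 'c) list) \<Rightarrow> ('c \<Rightarrow> 'c \<Rightarrow> 'v::comm_monoid_add) \<Rightarrow> 'c \<Rightarrow> 'v" where
  "sweedler \<Delta> \<beta> c = sum_list (map (\<lambda>(a, b). \<beta> a b) (\<Delta> c))"

lemma Phi_eq_sweedler: "Phi \<Delta> br f g = sweedler \<Delta> (\<lambda>a b. br (f a) (g b))"
  by (simp add: Phi_def sweedler_def fun_eq_iff)

lemma sweedler_add: "sweedler \<Delta> \<beta> c + sweedler \<Delta> \<gamma> c = sweedler \<Delta> (\<lambda>a b. \<beta> a b + \<gamma> a b) c"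
  by (simp add: sweedler_def sum_list_addf case_prod_unfold)

lemma sweedler_uminus: "sweedler \<Delta> (\<lambda>a b. - \<beta> a b) c = - sweedler \<Delta> \<beta> c"
  for \<beta> :: "'c \<Rightarrow> 'c \<Rightarrow> 'v::ab_group_add"
  using uminus_sum_list_map[of "\<lambda>(a, b). \<beta> a b" "\<Delta> c"]
  by (simp add: sweedler_def case_prod_unfold o_def)

lemma sweedler_zero: "sweedler \<Delta> (\<lambda>a b. 0) c = 0"
  by (simp add: sweedler_def case_prod_unfold)

lemma linear_sweedler:
  "Vector_Spaces.linear s1 s2 \<phi> \<Longrightarrow> \<phi> (sweedler \<Delta> \<beta> c) = sweedler \<Delta> (\<lambda>a b. \<phi> (\<beta> a b)) c"
  by (simp add: sweedler_def linear_sum_list case_prod_unfold)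

lemma sweedler_skew:
  assumes "skew_cocommutative s \<Delta>" and \<beta>: "bilinear_map s s sv \<beta>"
  shows "sweedler \<Delta> (\<lambda>a b. \<beta> b a) c = - sweedler \<Delta> \<beta> c"
proof -
  have "teq2 s (map (\<lambda>(a, b). (b, a)) (\<Delta> c)) (map (\<lambda>(a, b). (- a, b)) (\<Delta> c))"
    using assms(1) unfolding skew_cocommutative_def by blast
  from teq2_bilinear_map[OF this \<beta>]
  have "sweedler \<Delta> (\<lambda>a b. \<beta> b a) c = sweedler \<Delta> (\<lambda>a b. \<beta> (- a) b) c"
    by (simp add: sweedler_def case_prod_unfold o_def)
  also have "\<dots> = - sweedler \<Delta> \<beta> c"
  proof -
    have "\<beta> (- a) b = - \<beta> a b" for a b
      using \<beta> linear_uminus[of s sv "\<lambda>x. \<beta> x b"] by (simp add: bilinear_map_def)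
    then have "\<beta> (- a) = (\<lambda>b. - \<beta> a b)" for a
      by auto
    then show ?thesis
      by (simp add: sweedler_uminus)
  qed
  finally show ?thesis .
qed

lemma sweedler_coassoc:
  assumes "coassoc_coalgebra s \<Delta>" and \<tau>: "trilinear_map s sv \<tau>"
  shows "sweedler \<Delta> (\<lambda>a b. sweedler \<Delta> (\<lambda>a1 a2. \<tau> a1 a2 b) a) c
    = sweedler \<Delta> (\<lambda>a. sweedler \<Delta> (\<tau> a)) c"
proof -
  have "teq3 s
      (concat (map (\<lambda>(a, b). map (\<lambda>(a1, a2). (a1, a2, b)) (\<Delta> a)) (\<Delta> c)))
      (concat (map (\<lambda>(a, b). map (\<lambda>(b1, b2). (a, b1, b2)) (\<Delta> b)) (\<Delta> c)))"
    using assms(1) unfolding coassoc_coalgebra_def by blast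
  from teq3_trilinear_map[OF this \<tau>] show ?thesis
    by (simp add: sweedler_def map_concat sum_list_concat o_def case_prod_unfold)
qed

lemma sweedler3_rotate:
  assumes co: "coassoc_coalgebra s \<Delta>" and sk: "skew_cocommutative s \<Delta>"
    and \<tau>: "trilinear_map s sv \<tau>"
  shows "sweedler \<Delta> (\<lambda>a. sweedler \<Delta> (\<tau> a)) c
    = sweedler \<Delta> (\<lambda>a. sweedler \<Delta> (\<lambda>b1 b2. \<tau> b2 a b1)) c"
proof -
  have \<tau>': "trilinear_map s sv (\<lambda>x y z. \<tau> y x z)"
    using \<tau> by (simp add: trilinear_map_def)
  have first_pair:
    "sweedler \<Delta> (\<lambda>a1 a2. \<tau> a1 a2 b) a = - sweedler \<Delta> (\<lambda>a1 a2. \<tau> a2 a1 b) a" for a b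
    using sweedler_skew[OF sk, where \<beta> = "\<lambda>a1 a2. \<tau> a2 a1 b" and sv = sv] \<tau>
    by (simp add: trilinear_map_def bilinear_map_def)
  have last_pair:
    "sweedler \<Delta> (\<lambda>b1 b2. \<tau> b1 a b2) = (\<lambda>b. - sweedler \<Delta> (\<lambda>b1 b2. \<tau> b2 a b1) b)" for a
    using sweedler_skew[OF sk, where \<beta> = "\<lambda>b1 b2. \<tau> b1 a b2" and sv = sv] \<tau>
    by (simp add: trilinear_map_def bilinear_map_def fun_eq_iff)
  have "sweedler \<Delta> (\<lambda>a. sweedler \<Delta> (\<tau> a)) c
      = sweedler \<Delta> (\<lambda>a b. sweedler \<Delta> (\<lambda>a1 a2. \<tau> a1 a2 b) a) c"
    using sweedler_coassoc[OF co \<tau>] by simp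
  also have "\<dots> = - sweedler \<Delta> (\<lambda>a b. sweedler \<Delta> (\<lambda>a1 a2. \<tau> a2 a1 b) a) c"
    by (simp add: first_pair sweedler_uminus)
  also have "\<dots> = - sweedler \<Delta> (\<lambda>a. sweedler \<Delta> (\<lambda>b1 b2. \<tau> b1 a b2)) c"
    using sweedler_coassoc[OF co \<tau>'] by simp
  also have "\<dots> = sweedler \<Delta> (\<lambda>a. sweedler \<Delta> (\<lambda>b1 b2. \<tau> b2 a b1)) c"
    by (simp add: last_pair sweedler_uminus)
  finally show ?thesis .
qed

lemma lie_algebra_antisym:
  assumes "lie_algebra s br"
  shows "br y x = - br x y"
proof -
  have br: "bilinear_map s s s br" and alt: "\<And>x. br x x = 0"
    using assms unfolding lie_algebra_def by auto
  have "Vector_Spaces.linear s s (\<lambda>u. br u v)" "Vector_Spaces.linear s s (br u)" for u v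
    using br by (simp_all add: bilinear_map_def)
  then have "br (x + y) (x + y) = br x x + br x y + (br y x + br y y)"
    by (simp add: linear_iff)
  then show ?thesis
    using alt by (simp add: eq_neg_iff_add_eq_0 add.commute)
qed

lemma Phi_Phi_eq_sweedler3:
  assumes "bilinear_map sL sL sL br"
  shows "Phi \<Delta> br f (Phi \<Delta> br g h) c
    = sweedler \<Delta> (\<lambda>a. sweedler \<Delta> (\<lambda>b1 b2. br (f a) (br (g b1) (h b2)))) c"
proof -
  have "br u (sweedler \<Delta> \<beta> b) = sweedler \<Delta> (\<lambda>x y. br u (\<beta> x y)) b" for u \<beta> b
    using assms linear_sweedler[of sL sL "br u"] by (simp add: bilinear_map_def)
  then show ?thesis
    by (simp add: Phi_eq_sweedler)
qed

lemma Phi_commute: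
  assumes sk: "skew_cocommutative sC \<Delta>" and lie: "lie_algebra sL br"
    and f: "Vector_Spaces.linear sC sL f" and g: "Vector_Spaces.linear sC sL g"
  shows "Phi \<Delta> br g f = Phi \<Delta> br f g"
proof
  fix c
  have "bilinear_map sL sL sL br"
    using lie by (simp add: lie_algebra_def)
  from bilinear_map_compose_linear_args[OF bilinear_map_swap[OF this] f g]
  have "bilinear_map sC sC sL (\<lambda>x y. br (g y) (f x))"
    by simp
  then have "Phi \<Delta> br g f c = - sweedler \<Delta> (\<lambda>a b. br (g b) (f a)) c"
    using sweedler_skew[OF sk] by (simp add: Phi_eq_sweedler)
  also have "\<dots> = Phi \<Delta> br f g c"
    by (simp add: Phi_eq_sweedler lie_algebra_antisym[OF lie, of "f _"] sweedler_uminus)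
  finally show "Phi \<Delta> br g f c = Phi \<Delta> br f g c" .
qed

lemma Phi_jacobi:
  assumes co: "coassoc_coalgebra sC \<Delta>" and sk: "skew_cocommutative sC \<Delta>"
    and lie: "lie_algebra sL br" and f: "Vector_Spaces.linear sC sL f"
    and g: "Vector_Spaces.linear sC sL g" and h: "Vector_Spaces.linear sC sL h"
  shows "Phi \<Delta> br f (Phi \<Delta> br g h) c + Phi \<Delta> br g (Phi \<Delta> br h f) c
    + Phi \<Delta> br h (Phi \<Delta> br f g) c = 0"
proof -
  have br: "bilinear_map sL sL sL br"
    and jacobi: "\<And>x y z. br x (br y z) + br y (br z x) + br z (br x y) = 0"
    using lie by (simp_all add: lie_algebra_def)
  note rotate = sweedler3_rotate[OF co sk]
  note bracket = trilinear_map_iterated_bracket[OF br]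
  have "Phi \<Delta> br g (Phi \<Delta> br h f) c
      = sweedler \<Delta> (\<lambda>a. sweedler \<Delta> (\<lambda>b1 b2. br (g b1) (br (h b2) (f a)))) c"
    using rotate[OF bracket[OF g h f]] rotate[OF trilinear_map_rotate[OF bracket[OF g h f]]]
    by (simp add: Phi_Phi_eq_sweedler3[OF br])
  moreover have "Phi \<Delta> br h (Phi \<Delta> br f g) c
      = sweedler \<Delta> (\<lambda>a. sweedler \<Delta> (\<lambda>b1 b2. br (h b2) (br (f a) (g b1)))) c"
    using rotate[OF bracket[OF h f g]] by (simp add: Phi_Phi_eq_sweedler3[OF br])
  ultimately show ?thesis
    by (simp add: Phi_Phi_eq_sweedler3[OF br] sweedler_add jacobi sweedler_zero)
qed

theorem corollary2:
  fixes sC :: "'k::field \<Rightarrow> 'c::ab_group_add \<Rightarrow> 'c"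
    and sL :: "'k \<Rightarrow> 'l::ab_group_add \<Rightarrow> 'l"
    and \<Delta> :: "'c \<Rightarrow> ('c \<times> 'c) list"
    and br :: "'l \<Rightarrow> 'l \<Rightarrow> 'l"
  assumes "coassoc_coalgebra sC \<Delta>"
    and "skew_cocommutative sC \<Delta>"
    and "lie_algebra sL br"
  shows "(\<forall>f g. Vector_Spaces.linear sC sL f \<longrightarrow> Vector_Spaces.linear sC sL g \<longrightarrow>
            Phi \<Delta> br g f = Phi \<Delta> br f g)
       \<and> (\<forall>f g h. Vector_Spaces.linear sC sL f \<longrightarrow> Vector_Spaces.linear sC sL g \<longrightarrow>
            Vector_Spaces.linear sC sL h \<longrightarrow>
            (\<forall>c. Phi \<Delta> br f (Phi \<Delta> br g h) c + Phi \<Delta> br g (Phi \<Delta> br h f) c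
                 + Phi \<Delta> br h (Phi \<Delta> br f g) c = 0))"
  using Phi_commute[OF assms(2,3)] Phi_jacobi[OF assms] by blast

end
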